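(* Let $n$ be a nonnegative integer. Suppose there exist a nonnegative integer $B$ and integers $x,y,z$ such that $$\frac{2n+10B}{3}-10B^2=2x^2+3y^2+4z^2+(2x+3y+4z)^2<(B+1)^2.$$ Then there exist nonnegative integers $w_0,x_0,y_0,z_0$ with $n=p_5(w_0)+2p_5(x_0)+3p_5(y_0)+4p_5(z_0)$.
   Context: For $k\in\mathbb{Z}$, $p_5(k)=k(3k-1)/2$. *)

theory Defs
  imports Complex_Main
begin

definition p5 :: "int \<Rightarrow> int" where
  "p5 k = k * (3 * k - 1) div 2"

end

theory Submission
  imports Defs
begin

text \<open>Shifting the arguments of \<open>p5 w + 2 p5 x + 3 p5 y + 4 p5 z\<close> from B by
  \<open>(a, b, c, d)\<close> with \<open>a + 2b + 3c + 4d = 0\<close> kills the linear terms and leaves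
  \<open>10 p5 B + 3/2 (a\<^sup>2 + 2b\<^sup>2 + 3c\<^sup>2 + 4d\<^sup>2)\<close>. For \<open>(a, b, c, d) = (-(2x+3y+4z), x, y, z)\<close>
  this quadratic form is the one in the hypothesis, which thus says that n is such a shifted
  sum; the bound \<open>< (B+1)\<^sup>2\<close> puts every shift in \<open>[-B, B]\<close>, so all four
  arguments are nonnegative.\<close>

lemma two_p5: "2 * p5 k = k * (3 * k - 1)"
proof -
  have "even (k * (3 * k - 1))" by auto
  then show ?thesis unfolding p5_def by simp
qed

lemma two_p5_add: "2 * p5 (B + t) = 2 * p5 B + (6 * B - 1) * t + 3 * t^2"
  unfolding two_p5 by (simp add: algebra_simps power2_eq_square)

lemma weighted_p5_shift:
  fixes B a b c d :: int
  assumes "a + 2*b + 3*c + 4*d = 0"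
  shows "2 * (p5 (B + a) + 2 * p5 (B + b) + 3 * p5 (B + c) + 4 * p5 (B + d))
           = 20 * p5 B + 3 * (a^2 + 2*b^2 + 3*c^2 + 4*d^2)"
proof -
  have "2 * (p5 (B + a) + 2 * p5 (B + b) + 3 * p5 (B + c) + 4 * p5 (B + d))
      = 2 * p5 (B + a) + 2 * (2 * p5 (B + b)) + 3 * (2 * p5 (B + c)) + 4 * (2 * p5 (B + d))"
    by (simp add: algebra_simps)
  also have "\<dots> = 20 * p5 B + (6 * B - 1) * (a + 2*b + 3*c + 4*d)
                    + 3 * (a^2 + 2*b^2 + 3*c^2 + 4*d^2)"
    unfolding two_p5_add by (simp add: algebra_simps)
  finally show ?thesis
    using assms by simp
qed

lemma abs_le_of_square_less_square_add_one:
  fixes t B :: int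
  assumes "t^2 < (B + 1)^2" and "B \<ge> 0"
  shows "\<bar>t\<bar> \<le> B"
proof (rule ccontr)
  assume "\<not> \<bar>t\<bar> \<le> B"
  then have "(B + 1)^2 \<le> \<bar>t\<bar>^2"
    using assms(2) by (intro power_mono) auto
  with assms(1) show False
    by simp
qed

theorem lemma3p2:
  fixes n B x y z :: int
  assumes "n \<ge> 0" and "B \<ge> 0"
    and "(2 * of_int n + 10 * of_int B) / 3 - 10 * (of_int B)^2
           = (of_int (2*x^2 + 3*y^2 + 4*z^2 + (2*x + 3*y + 4*z)^2) :: real)"
    and "2*x^2 + 3*y^2 + 4*z^2 + (2*x + 3*y + 4*z)^2 < (B + 1)^2"
  shows "\<exists>w0 x0 y0 z0 :: int. w0 \<ge> 0 \<and> x0 \<ge> 0 \<and> y0 \<ge> 0 \<and> z0 \<ge> 0 \<and>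
           n = p5 w0 + 2 * p5 x0 + 3 * p5 y0 + 4 * p5 z0"
proof -
  define s where "s = 2*x + 3*y + 4*z"
  define Q where "Q = s^2 + 2*x^2 + 3*y^2 + 4*z^2"
  have Q_bound: "Q < (B + 1)^2"
    using assms(4) unfolding Q_def s_def by linarith
  have shifts_balanced: "-s + 2*x + 3*y + 4*z = 0"
    by (simp add: s_def)
  have "real_of_int (2*n + 10*B - 30*B^2) = real_of_int (3*Q)"
    using assms(3) unfolding Q_def s_def by (simp add: field_simps)
  then have "2*n + 10*B - 30*B^2 = 3*Q"
    by (simp only: of_int_eq_iff)
  then have "2*n = 20 * p5 B + 3*Q"
    using two_p5[of B] by (simp add: algebra_simps power2_eq_square)
  also have "\<dots> = 2 * (p5 (B - s) + 2 * p5 (B + x) + 3 * p5 (B + y) + 4 * p5 (B + z))"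
    using weighted_p5_shift[OF shifts_balanced, of B] by (simp add: Q_def)
  finally have n_eq: "n = p5 (B - s) + 2 * p5 (B + x) + 3 * p5 (B + y) + 4 * p5 (B + z)"
    by simp
  have abs_le_B: "\<bar>t\<bar> \<le> B" if "t^2 \<le> Q" for t
    using abs_le_of_square_less_square_add_one[OF le_less_trans[OF that Q_bound] assms(2)] .
  have "\<bar>s\<bar> \<le> B" "\<bar>x\<bar> \<le> B" "\<bar>y\<bar> \<le> B" "\<bar>z\<bar> \<le> B"
    by (rule abs_le_B; simp add: Q_def add_increasing add_increasing2)+
  then have "B - s \<ge> 0" "B + x \<ge> 0" "B + y \<ge> 0" "B + z \<ge> 0"
    by (simp_all add: abs_le_iff)
  with n_eq show ?thesis
    by (intro exI[of _ "B - s"] exI[of _ "B + x"] exI[of _ "B + y"] exI[of _ "B + z"]) simp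
qed

end
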